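(* Let $(\alpha_n,\beta_n)_{n\ge1}$ be integers with $12\sum_{k<n}\beta_k<\alpha_n\le\beta_n$ for every $n$ and $\sum_i\frac{\log\beta_i}{3^i}<\infty$. Then for all sufficiently small $\varepsilon>0$, a $B_\varepsilon$-random subset of $\mathbb{Z}^2$ is bi-sparse (with respect to $(\alpha_n,\beta_n)$) with probability $1$.
   Context: Distances on $\mathbb{Z}^2$ are $\ell_\infty$; diameters and $\beta$-neighborhoods are taken with respect to this distance. For $E\subset\mathbb{Z}^2$ and integers $\beta\ge\alpha>0$, a nonempty $X\subset E$ is an $(\alpha,\beta)$-bi-island in $E$ if $X=X_0\cup X_1$ for some sets $X_0,X_1$ such that: the $\beta$-neighborhood of $X$ contains no point of $E\setminus X$; $X_0$ and $X_1$ have diameter at most $\alpha$; and the distance between $X_0$ and $X_1$ is at most $\beta$ (one of them may be empty). Given $(\alpha_i,\beta_i)$, the cleaning process sets $E_0=E$ and obtains $E_i$ from $E_{i-1}$ by removing all $(\alpha_i,\beta_i)$-bi-islands of $E_{i-1}$ (rank $i$ bi-islands); a point is affected at step $i$ if it lies in the $\beta_i$-neighborhood of some rank $i$ bi-island. $E$ is bi-sparse if every point of $E$ is removed at some step and every point of $\mathbb{Z}^2$ is affected at only finitely many steps. $B_\varepsilon$ is the Bernoulli distribution on subsets of $\mathbb{Z}^2$: each point belongs to the set independently with probability $\varepsilon$. *)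

theory Defs
  imports "HOL-Probability.Probability"
begin

type_synonym pt = "int \<times> int"

definition linf :: "pt \<Rightarrow> pt \<Rightarrow> int" where
  "linf p q = max \<bar>fst p - fst q\<bar> \<bar>snd p - snd q\<bar>"

definition nbhd :: "int \<Rightarrow> pt set \<Rightarrow> pt set" where
  "nbhd b X = {q. \<exists>p\<in>X. linf p q \<le> b}"

definition diam_le :: "pt set \<Rightarrow> int \<Rightarrow> bool" where
  "diam_le X a \<longleftrightarrow> (\<forall>p\<in>X. \<forall>q\<in>X. linf p q \<le> a)"

definition setdist_le :: "pt set \<Rightarrow> pt set \<Rightarrow> int \<Rightarrow> bool" where
  "setdist_le X Y b \<longleftrightarrow> X = {} \<or> Y = {} \<or> (\<exists>p\<in>X. \<exists>q\<in>Y. linf p q \<le> b)"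

definition bi_island :: "int \<Rightarrow> int \<Rightarrow> pt set \<Rightarrow> pt set \<Rightarrow> bool" where
  "bi_island a b E X \<longleftrightarrow> X \<noteq> {} \<and> X \<subseteq> E \<and> nbhd b X \<inter> (E - X) = {} \<and>
     (\<exists>X0 X1. X = X0 \<union> X1 \<and> diam_le X0 a \<and> diam_le X1 a \<and> setdist_le X0 X1 b)"

(* cleaning process; the parameter sequences are indexed from 1 (index 0 unused) *)
fun clean :: "(nat \<Rightarrow> int) \<Rightarrow> (nat \<Rightarrow> int) \<Rightarrow> pt set \<Rightarrow> nat \<Rightarrow> pt set" where
  "clean a b E 0 = E"
| "clean a b E (Suc i) = clean a b E i - \<Union>{X. bi_island (a (Suc i)) (b (Suc i)) (clean a b E i) X}"

definition affected :: "(nat \<Rightarrow> int) \<Rightarrow> (nat \<Rightarrow> int) \<Rightarrow> pt set \<Rightarrow> nat \<Rightarrow> pt \<Rightarrow> bool" where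
  "affected a b E i x \<longleftrightarrow> 1 \<le> i \<and>
     (\<exists>X. bi_island (a i) (b i) (clean a b E (i - 1)) X \<and> x \<in> nbhd (b i) X)"

definition bi_sparse :: "(nat \<Rightarrow> int) \<Rightarrow> (nat \<Rightarrow> int) \<Rightarrow> pt set \<Rightarrow> bool" where
  "bi_sparse a b E \<longleftrightarrow> (\<forall>x\<in>E. \<exists>i. x \<notin> clean a b E i) \<and>
     (\<forall>x. finite {i. affected a b E i x})"

(* Bernoulli measure B_eps on subsets of Z^2, as indicator functions *)
definition bernoulli_field :: "real \<Rightarrow> (pt \<Rightarrow> bool) measure" where
  "bernoulli_field eps = PiM UNIV (\<lambda>_. measure_pmf (bernoulli_pmf eps))"

end

theory Submission
  imports Defs
begin

(*
  Proof idea (a first-moment / Borel-Cantelli argument).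

  Deterministic part: if a point y survives the first n cleaning steps, then E contains a
  "witness set" of exactly 3^n points near y.  Indeed, since y is not in a bi-island of rank n,
  one finds two further surviving points z, w within distance 3 b_n of y which are pairwise
  more than a_n / 2 apart; by induction each of y, z, w carries a witness set of rank n - 1,
  and these three sets are disjoint because they have radius 3 (b_1 + ... + b_(n-1)) < a_n / 4.
  The family witness_sets b n y of all such sets is therefore defined recursively.

  Probabilistic part: there are at most exp (3^n K) witness sets of rank n at a given point,
  where K is finite by the summability hypothesis, and each lies in E with probability eps^(3^n).
  So for eps small the event "some point within b_(i+1) of x has a witness set of rank i"
  has probability at most 9 exp (-i), and by Borel-Cantelli almost surely only finitely many
  of these events occur for every x.  Whenever this holds, every point is eventually removed
  and affected only finitely often, i.e. E is bi-sparse.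
*)

section \<open>The l-infinity metric and squares\<close>

lemma linf_sym: "linf p q = linf q p"
  by (auto simp: linf_def)

lemma linf_self [simp]: "linf p p = 0"
  by (simp add: linf_def)

lemma linf_triangle: "linf p r \<le> linf p q + linf q r"
  by (auto simp: linf_def)

definition sq :: "pt \<Rightarrow> int \<Rightarrow> pt set" where
  "sq x r = {p. linf x p \<le> r}"

lemma sq_eq: "sq x r = {fst x - r .. fst x + r} \<times> {snd x - r .. snd x + r}"
  by (cases x) (auto simp: sq_def linf_def)

lemma finite_sq [simp]: "finite (sq x r)"
  by (simp add: sq_eq)

lemma card_sq: "r \<ge> 0 \<Longrightarrow> real (card (sq x r)) = (2 * r + 1) ^ 2"
  by (simp add: sq_eq card_cartesian_product power2_eq_square)

lemma disjoint_if_centers_far: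
  assumes "S1 \<subseteq> sq y R" "S2 \<subseteq> sq z R" "linf y z > h" "2 * R \<le> h"
  shows "S1 \<inter> S2 = {}"
proof (rule ccontr)
  assume "S1 \<inter> S2 \<noteq> {}"
  then obtain p where "linf y p \<le> R" "linf z p \<le> R"
    using assms by (auto simp: sq_def)
  then show False
    using linf_triangle[of y z p] linf_sym[of z p] assms by simp
qed

section \<open>Witness sets\<close>

fun witness_sets :: "(nat \<Rightarrow> int) \<Rightarrow> nat \<Rightarrow> pt \<Rightarrow> pt set set" where
  "witness_sets b 0 x = {{x}}"
| "witness_sets b (Suc n) x =
     {S1 \<union> S2 \<union> S3 | S1 S2 S3 z w. z \<in> sq x (3 * b (Suc n)) \<and> w \<in> sq x (3 * b (Suc n)) \<and>
        S1 \<in> witness_sets b n x \<and> S2 \<in> witness_sets b n z \<and> S3 \<in> witness_sets b n w \<and>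
        S1 \<inter> S2 = {} \<and> S1 \<inter> S3 = {} \<and> S2 \<inter> S3 = {}}"

lemma witness_sets_Suc_subset:
  fixes b :: "nat \<Rightarrow> int" and n :: nat and x :: pt
  defines "B \<equiv> sq x (3 * b (Suc n))"
  defines "U \<equiv> \<Union>y\<in>B. witness_sets b n y"
  shows "witness_sets b (Suc n) x \<subseteq> (\<lambda>(z, w, S1, S2, S3). S1 \<union> S2 \<union> S3) ` (B \<times> B \<times> U \<times> U \<times> U)"
proof
  fix S assume "S \<in> witness_sets b (Suc n) x"
  then obtain S1 S2 S3 z w where h: "S = S1 \<union> S2 \<union> S3" "z \<in> B" "w \<in> B"
    "S1 \<in> witness_sets b n x" "S2 \<in> witness_sets b n z" "S3 \<in> witness_sets b n w"
    by (auto simp: B_def)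
  have "x \<in> B"
    using h(2) by (simp add: B_def sq_def linf_def) arith
  then show "S \<in> (\<lambda>(z, w, S1, S2, S3). S1 \<union> S2 \<union> S3) ` (B \<times> B \<times> U \<times> U \<times> U)"
    using h by (intro image_eqI[of _ _ "(z, w, S1, S2, S3)"]) (auto simp: U_def)
qed

lemma finite_witness_sets: "finite (witness_sets b n x)"
proof (induction n arbitrary: x)
  case 0
  then show ?case by simp
next
  case (Suc n)
  have "finite (\<Union>y\<in>sq x (3 * b (Suc n)). witness_sets b n y)"
    using Suc.IH by simp
  then show ?case
    using witness_sets_Suc_subset[of b n x]
    by (meson finite_SigmaI finite_sq finite_imageI finite_subset)
qed

lemma card_witness_sets_Suc:
  assumes "\<And>y. card (witness_sets b n y) \<le> M"
  shows "card (witness_sets b (Suc n) x) \<le> card (sq x (3 * b (Suc n))) ^ 5 * M ^ 3"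
proof -
  define B where "B = sq x (3 * b (Suc n))"
  define U where "U = (\<Union>y\<in>B. witness_sets b n y)"
  have fU: "finite U"
    using finite_witness_sets by (auto simp: U_def B_def)
  have cU: "card U \<le> card B * M"
  proof -
    have "card U \<le> (\<Sum>y\<in>B. card (witness_sets b n y))"
      unfolding U_def by (rule card_UN_le) (simp add: B_def)
    also have "\<dots> \<le> (\<Sum>y\<in>B. M)"
      by (rule sum_mono) (rule assms)
    finally show ?thesis by simp
  qed
  have "card (witness_sets b (Suc n) x)
          \<le> card ((\<lambda>(z, w, S1, S2, S3). S1 \<union> S2 \<union> S3) ` (B \<times> B \<times> U \<times> U \<times> U))"
    using witness_sets_Suc_subset[of b n x] fU unfolding B_def U_def
    by (intro card_mono) (auto simp: B_def)
  also have "\<dots> \<le> card (B \<times> B \<times> U \<times> U \<times> U)"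
    by (rule card_image_le) (use fU in \<open>auto simp: B_def\<close>)
  also have "\<dots> = card B * card B * card U * card U * card U"
    by (simp add: card_cartesian_product)
  also have "\<dots> \<le> card B * card B * (card B * M) * (card B * M) * (card B * M)"
    using cU by (intro mult_mono) auto
  also have "\<dots> = card B ^ 5 * M ^ 3"
    by (simp add: power_def algebra_simps)
  finally show ?thesis
    by (simp add: B_def)
qed

lemma card_witness_set: "S \<in> witness_sets b n x \<Longrightarrow> finite S \<and> card S = 3 ^ n"
proof (induction n arbitrary: x S)
  case 0
  then show ?case by simp
next
  case (Suc n)
  then obtain S1 S2 S3 z w where h: "S = S1 \<union> S2 \<union> S3"
    "S1 \<in> witness_sets b n x" "S2 \<in> witness_sets b n z" "S3 \<in> witness_sets b n w"
    "S1 \<inter> S2 = {}" "S1 \<inter> S3 = {}" "S2 \<inter> S3 = {}"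
    by auto
  have f: "finite S1" "finite S2" "finite S3" "card S1 = 3 ^ n" "card S2 = 3 ^ n" "card S3 = 3 ^ n"
    using Suc.IH h by blast+
  have "card S = card S1 + card S2 + card S3"
    unfolding h(1) using f h by (simp add: card_Un_disjoint Int_Un_distrib2)
  then show ?case
    using f h by simp
qed

lemma witness_set_radius:
  assumes "\<And>k. k \<ge> 1 \<Longrightarrow> b k \<ge> 0"
  shows "S \<in> witness_sets b n x \<Longrightarrow> S \<subseteq> sq x (3 * (\<Sum>k\<in>{1..n}. b k))"
proof (induction n arbitrary: x S)
  case 0
  then show ?case by (simp add: sq_def)
next
  case (Suc n)
  define R where "R = 3 * (\<Sum>k\<in>{1..n}. b k)"
  have R: "3 * (\<Sum>k\<in>{1..Suc n}. b k) = R + 3 * b (Suc n)"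
    by (simp add: R_def algebra_simps)
  have b0: "b (Suc n) \<ge> 0"
    using assms by simp
  from Suc.prems obtain S1 S2 S3 z w where h: "S = S1 \<union> S2 \<union> S3"
    "z \<in> sq x (3 * b (Suc n))" "w \<in> sq x (3 * b (Suc n))"
    "S1 \<in> witness_sets b n x" "S2 \<in> witness_sets b n z" "S3 \<in> witness_sets b n w"
    by auto
  have shifted: "sq y R \<subseteq> sq x (R + 3 * b (Suc n))" if "y \<in> sq x (3 * b (Suc n))" for y
  proof
    fix p assume "p \<in> sq y R"
    then show "p \<in> sq x (R + 3 * b (Suc n))"
      using that linf_triangle[of x p y] by (simp add: sq_def)
  qed
  have "S1 \<subseteq> sq x R" "S2 \<subseteq> sq z R" "S3 \<subseteq> sq w R"
    using Suc.IH h by (auto simp: R_def)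
  moreover have "sq x R \<subseteq> sq x (R + 3 * b (Suc n))"
    using b0 by (auto simp: sq_def)
  ultimately show ?case
    unfolding R h(1) using shifted[OF h(2)] shifted[OF h(3)] by blast
qed

section \<open>Surviving points carry witness sets\<close>

text \<open>Otherwise the points of F near x
  (or near x and z) would form a bi-island containing x.\<close>

lemma two_far_neighbours:
  fixes F :: "pt set" and A B :: int
  assumes x: "x \<in> F" and not_island: "\<not> (\<exists>X. bi_island A B F X \<and> x \<in> X)" and "0 < A" "A \<le> B"
  shows "\<exists>z w. z \<in> F \<and> w \<in> F \<and> linf x z > A div 2 \<and> linf x w > A div 2 \<and> linf z w > A div 2
          \<and> linf x z \<le> 3 * B \<and> linf x w \<le> 3 * B"
proof -
  define h where "h = A div 2"
  have h: "0 \<le> h" "2 * h \<le> A"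
    using assms by (auto simp: h_def)
  have small: "diam_le (F \<inter> sq y h) A" for y
    unfolding diam_le_def sq_def using h linf_triangle linf_sym by (smt (verit) Int_iff mem_Collect_eq)
  define X0 where "X0 = F \<inter> sq x h"
  have x0: "x \<in> X0"
    using x h by (simp add: X0_def sq_def linf_def)
  have "nbhd B X0 \<inter> (F - X0) \<noteq> {}"
  proof
    assume "nbhd B X0 \<inter> (F - X0) = {}"
    then have "bi_island A B F X0"
      using x0 small[of x] unfolding bi_island_def setdist_le_def
      by (intro conjI exI[of _ X0] exI[of _ "{}"]) (auto simp: X0_def diam_le_def)
    then show False
      using not_island x0 by blast
  qed
  then obtain z p0 where z: "z \<in> F" "z \<notin> X0" "p0 \<in> X0" "linf p0 z \<le> B"
    unfolding nbhd_def by auto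
  have xz: "h < linf x z" "linf x z \<le> h + B"
    using z linf_triangle[of x z p0] by (auto simp: X0_def sq_def)
  define X1 where "X1 = F \<inter> sq z h"
  have z1: "z \<in> X1"
    using z h by (simp add: X1_def sq_def linf_def)
  have "nbhd B (X0 \<union> X1) \<inter> (F - (X0 \<union> X1)) \<noteq> {}"
  proof
    assume "nbhd B (X0 \<union> X1) \<inter> (F - (X0 \<union> X1)) = {}"
    then have "bi_island A B F (X0 \<union> X1)"
      using x0 z1 small[of x] small[of z] z(3,4) unfolding bi_island_def setdist_le_def
      by (intro conjI exI[of _ X0] exI[of _ X1]) (auto simp: X0_def X1_def)
    then show False
      using not_island x0 by blast
  qed
  then obtain w p1 where w: "w \<in> F" "w \<notin> X0" "w \<notin> X1" "p1 \<in> X0 \<union> X1" "linf p1 w \<le> B"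
    unfolding nbhd_def by auto
  have xp1: "linf x p1 \<le> 2 * h + B"
  proof (cases "p1 \<in> X0")
    case True
    then show ?thesis using h assms by (auto simp: X0_def sq_def)
  next
    case False
    then have "linf z p1 \<le> h"
      using w(4) by (auto simp: X1_def sq_def)
    then show ?thesis
      using linf_triangle[of x p1 z] xz by simp
  qed
  have "linf x w \<le> 2 * h + 2 * B"
    using linf_triangle[of x w p1] xp1 w(5) by simp
  moreover have "h < linf x w" "h < linf z w"
    using w by (auto simp: X0_def X1_def sq_def)
  ultimately show ?thesis
    using z(1) w(1) xz h assms unfolding h_def[symmetric] by (intro exI[of _ z] exI[of _ w]) auto
qed

lemma b_positive:
  fixes a b :: "nat \<Rightarrow> int"
  assumes "\<And>n. n \<ge> 1 \<Longrightarrow> 12 * (\<Sum>k\<in>{1..<n}. b k) < a n \<and> a n \<le> b n"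
  shows "k \<ge> 1 \<Longrightarrow> b k > 0"
proof (induction k rule: less_induct)
  case (less k)
  have "(\<Sum>k\<in>{1..<k}. b k) \<ge> 0"
    using less.IH by (intro sum_nonneg) fastforce
  then show ?case
    using assms[OF less.prems] by linarith
qed

lemma survivor_has_witness:
  assumes hyp: "\<And>n. n \<ge> 1 \<Longrightarrow> 12 * (\<Sum>k\<in>{1..<n}. b k) < a n \<and> a n \<le> b n"
  shows "y \<in> clean a b E n \<Longrightarrow> \<exists>S\<in>witness_sets b n y. S \<subseteq> E"
proof (induction n arbitrary: y)
  case 0
  then show ?case by simp
next
  case (Suc n)
  let ?F = "clean a b E n" and ?A = "a (Suc n)" and ?B = "b (Suc n)"
  define R where "R = 3 * (\<Sum>k\<in>{1..n}. b k)"
  have b0: "\<And>k. k \<ge> 1 \<Longrightarrow> b k \<ge> 0"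
    using b_positive[OF hyp] by (meson less_imp_le)
  have AB: "12 * (\<Sum>k\<in>{1..n}. b k) < ?A" "?A \<le> ?B"
    using hyp[of "Suc n"] by (auto simp: atLeastLessThanSuc_atLeastAtMost)
  have "R \<ge> 0"
    using b0 by (auto simp: R_def intro!: sum_nonneg)
  then have A0: "0 < ?A" and R2: "2 * R \<le> ?A div 2"
    using AB by (auto simp: R_def)
  have yF: "y \<in> ?F" and not_island: "\<not> (\<exists>X. bi_island ?A ?B ?F X \<and> y \<in> X)"
    using Suc.prems by auto
  obtain z w where zw: "z \<in> ?F" "w \<in> ?F"
      "linf y z > ?A div 2" "linf y w > ?A div 2" "linf z w > ?A div 2"
      "linf y z \<le> 3 * ?B" "linf y w \<le> 3 * ?B"
    using two_far_neighbours[OF yF not_island A0 AB(2)] by blast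
  obtain S1 S2 S3 where S: "S1 \<in> witness_sets b n y" "S2 \<in> witness_sets b n z"
      "S3 \<in> witness_sets b n w" "S1 \<union> S2 \<union> S3 \<subseteq> E"
    using Suc.IH[OF yF] Suc.IH[OF zw(1)] Suc.IH[OF zw(2)] by blast
  have r: "S1 \<subseteq> sq y R" "S2 \<subseteq> sq z R" "S3 \<subseteq> sq w R"
    using witness_set_radius[OF b0] S by (auto simp: R_def)
  have "S1 \<inter> S2 = {}" "S1 \<inter> S3 = {}" "S2 \<inter> S3 = {}"
    using disjoint_if_centers_far[OF _ _ _ R2] r zw(3-5) by blast+
  then have "S1 \<union> S2 \<union> S3 \<in> witness_sets b (Suc n) y"
    using S zw(6,7) unfolding witness_sets.simps sq_def by blast
  then show ?case
    using S(4) by blast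
qed

definition witness_event :: "(nat \<Rightarrow> int) \<Rightarrow> nat \<Rightarrow> pt \<Rightarrow> (pt \<Rightarrow> bool) set" where
  "witness_event b n y = {\<omega>. \<exists>S\<in>witness_sets b n y. \<forall>p\<in>S. \<omega> p}"

definition bad_event :: "(nat \<Rightarrow> int) \<Rightarrow> pt \<Rightarrow> nat \<Rightarrow> (pt \<Rightarrow> bool) set" where
  "bad_event b x i = (\<Union>y\<in>sq x (b (Suc i)). witness_event b i y)"

text \<open>If, for every x, only finitely many bad events near x occur, the set is bi-sparse: a point
  kept forever, or affected at step i + 1, produces a survivor near x after i steps.\<close>

lemma bi_sparse_if_bad_events_finite:
  assumes hyp: "\<And>n. n \<ge> 1 \<Longrightarrow> 12 * (\<Sum>k\<in>{1..<n}. b k) < a n \<and> a n \<le> b n"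
    and ev: "\<forall>x. \<forall>\<^sub>F i in sequentially. \<omega> \<notin> bad_event b x i"
  shows "bi_sparse a b {p. \<omega> p}"
proof -
  let ?E = "{p. \<omega> p}"
  have in_bad: "\<omega> \<in> bad_event b x i" if "y \<in> clean a b ?E i" "linf x y \<le> b (Suc i)" for x y i
    using survivor_has_witness[OF hyp that(1)] that(2)
    unfolding bad_event_def witness_event_def sq_def by blast
  obtain N where N: "\<And>x j. j \<ge> N x \<Longrightarrow> \<omega> \<notin> bad_event b x j"
    using ev unfolding eventually_sequentially by metis
  have removed: "\<exists>i. x \<notin> clean a b ?E i" for x
    using in_bad[where x = x and y = x and i = "N x"] N[where x = x and j = "N x"] b_positive[OF hyp, of "Suc (N x)"]
    by (auto simp: linf_def)
  have "{i. affected a b ?E i x} \<subseteq> {..N x}" for x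
  proof
    fix i assume "i \<in> {i. affected a b ?E i x}"
    then obtain X p where i1: "1 \<le> i" and X: "bi_island (a i) (b i) (clean a b ?E (i - 1)) X"
        and p: "p \<in> X" "linf p x \<le> b i"
      by (auto simp: affected_def nbhd_def)
    have "p \<in> clean a b ?E (i - 1)" and "Suc (i - 1) = i"
      using X p i1 by (auto simp: bi_island_def)
    then have "\<omega> \<in> bad_event b x (i - 1)"
      using in_bad[where x = x and y = p and i = "i - 1"] p(2) linf_sym[of p x] by simp
    then show "i \<in> {..N x}"
      using N[where x = x and j = "i - 1"] by force
  qed
  then have "finite {i. affected a b ?E i x}" for x
    by (meson finite_atMost finite_subset)
  then show ?thesis
    unfolding bi_sparse_def using removed by blast
qed

section \<open>Counting witness sets\<close>

text \<open>There are at most exp (3^n (c_1/3 + ... + c_n/3^n)) witness sets of rank n at a point,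
  where c_k = 10 ln (7 b_k) bounds the logarithm of the tenth power of the relevant square size.\<close>

lemma card_witness_sets_exp:
  fixes b :: "nat \<Rightarrow> int"
  assumes b1: "\<And>k. k \<ge> 1 \<Longrightarrow> b k \<ge> 1"
  shows "real (card (witness_sets b n x))
           \<le> exp (3 ^ n * (\<Sum>k\<in>{1..n}. 10 * ln (7 * real_of_int (b k)) / 3 ^ k))"
proof (induction n arbitrary: x)
  case 0
  then show ?case by simp
next
  case (Suc n)
  define c where "c = (\<Sum>k\<in>{1..n}. 10 * ln (7 * real_of_int (b k)) / 3 ^ k)"
  define M where "M = nat \<lfloor>exp (3 ^ n * c)\<rfloor>"
  define B where "B = real_of_int (b (Suc n))"
  have B1: "B \<ge> 1"
    using b1 by (simp add: B_def)
  have M: "card (witness_sets b n y) \<le> M" for y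
  proof -
    have "int (card (witness_sets b n y)) \<le> \<lfloor>exp (3 ^ n * c)\<rfloor>"
      using Suc.IH[of y] by (simp add: c_def le_floor_iff)
    then show ?thesis unfolding M_def by linarith
  qed
  have Mr: "real M \<le> exp (3 ^ n * c)"
    unfolding M_def by simp
  have card_B: "real (card (sq x (3 * b (Suc n)))) = (6 * B + 1) ^ 2"
    using card_sq[of "3 * b (Suc n)" x] b1[of "Suc n"] by (simp add: B_def)
  have "real (card (witness_sets b (Suc n) x)) \<le> real (card (sq x (3 * b (Suc n))) ^ 5 * M ^ 3)"
    using card_witness_sets_Suc[OF M, of x] of_nat_le_iff by blast
  also have "\<dots> = (6 * B + 1) ^ 10 * real M ^ 3"
    using card_B by (simp flip: power_mult)
  also have "\<dots> \<le> (7 * B) ^ 10 * exp (3 ^ n * c) ^ 3"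
    using Mr B1 by (intro mult_mono power_mono) auto
  also have "\<dots> = exp (10 * ln (7 * B)) * exp (3 ^ n * c) ^ 3"
    using B1 by (simp add: exp_of_nat_mult[of 10, simplified])
  also have "\<dots> = exp (3 ^ Suc n * (10 * ln (7 * B) / 3 ^ Suc n + c))"
    by (simp add: exp_of_nat_mult[symmetric] exp_add[symmetric] algebra_simps)
  also have "\<dots> = exp (3 ^ Suc n * (\<Sum>k\<in>{1..Suc n}. 10 * ln (7 * real_of_int (b k)) / 3 ^ k))"
    by (simp add: c_def B_def)
  finally show ?case .
qed

lemma card_witness_sets_uniform:
  fixes b :: "nat \<Rightarrow> int"
  assumes b1: "\<And>k. k \<ge> 1 \<Longrightarrow> b k \<ge> 1"
    and summ: "summable (\<lambda>i. ln (real_of_int (b (Suc i))) / 3 ^ (Suc i))"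
  obtains K where "K \<ge> 0" "\<And>n x. real (card (witness_sets b n x)) \<le> exp (3 ^ n * K)"
proof -
  define f where "f i = 10 * ln (7 * real_of_int (b (Suc i))) / 3 ^ Suc i" for i
  have f_eq: "f = (\<lambda>i. (10 * ln 7 / 3) * (1 / 3) ^ i + 10 * (ln (real_of_int (b (Suc i))) / 3 ^ Suc i))"
  proof
    fix i
    have "real_of_int (b (Suc i)) > 0"
      using b1[of "Suc i"] by simp
    then show "f i = (10 * ln 7 / 3) * (1 / 3) ^ i + 10 * (ln (real_of_int (b (Suc i))) / 3 ^ Suc i)"
      by (simp add: f_def ln_mult add_divide_distrib power_one_over)
  qed
  have fs: "summable f"
    unfolding f_eq by (intro summable_add summable_mult summable_geometric summ) simp
  have f0: "f i \<ge> 0" for i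
    using b1[of "Suc i"] by (simp add: f_def)
  show ?thesis
  proof
    show "suminf f \<ge> 0"
      using fs f0 by (simp add: suminf_nonneg)
    fix n x
    have "(\<Sum>k\<in>{1..n}. 10 * ln (7 * real_of_int (b k)) / 3 ^ k) = (\<Sum>k<n. f k)"
      unfolding f_def by (rule sum_bounds_lt_plus1[symmetric])
    also have "\<dots> \<le> suminf f"
      using fs f0 by (intro sum_le_suminf) auto
    finally have "exp (3 ^ n * (\<Sum>k\<in>{1..n}. 10 * ln (7 * real_of_int (b k)) / 3 ^ k))
                    \<le> exp (3 ^ n * suminf f)"
      by (simp add: mult_left_mono)
    then show "real (card (witness_sets b n x)) \<le> exp (3 ^ n * suminf f)"
      using card_witness_sets_exp[of b n x, OF b1] by linarith
  qed
qed

section \<open>The Bernoulli field\<close>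

lemma prob_space_bernoulli_field: "prob_space (bernoulli_field e)"
  unfolding bernoulli_field_def by (intro prob_space_PiM prob_space_measure_pmf)

definition cyl :: "pt set \<Rightarrow> (pt \<Rightarrow> bool) set" where
  "cyl S = {\<omega>. \<forall>p\<in>S. \<omega> p}"

lemma cyl_prod_emb: "cyl S = prod_emb UNIV (\<lambda>_. measure_pmf (bernoulli_pmf e)) S (\<Pi>\<^sub>E p\<in>S. {True})"
  by (auto simp: cyl_def prod_emb_def space_PiM PiE_iff restrict_def fun_eq_iff) metis

lemma cyl_sets: "finite S \<Longrightarrow> cyl S \<in> sets (bernoulli_field e)"
  unfolding bernoulli_field_def cyl_prod_emb[of S e] by (rule sets_PiM_I) auto

lemma measure_cyl:
  assumes "finite S" "0 \<le> e" "e \<le> 1"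
  shows "measure (bernoulli_field e) (cyl S) = e ^ card S"
proof -
  have "emeasure (bernoulli_field e) (cyl S)
          = (\<Prod>p\<in>S. emeasure (measure_pmf (bernoulli_pmf e)) {True})"
    unfolding bernoulli_field_def cyl_prod_emb[of S e]
    by (rule emeasure_PiM_emb) (auto simp: prob_space_measure_pmf assms)
  also have "\<dots> = ennreal (e ^ card S)"
    using assms by (simp add: emeasure_pmf_single ennreal_power)
  finally show ?thesis
    by (simp add: measure_def assms)
qed

lemma witness_event_eq: "witness_event b n y = (\<Union>S\<in>witness_sets b n y. cyl S)"
  by (auto simp: witness_event_def cyl_def)

lemma witness_event_sets: "witness_event b n y \<in> sets (bernoulli_field e)"
  unfolding witness_event_eq using finite_witness_sets card_witness_set cyl_sets
  by (metis sets.finite_UN)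

lemma bad_event_sets: "bad_event b x i \<in> sets (bernoulli_field e)"
  unfolding bad_event_def by (auto simp: witness_event_sets)

lemma measure_witness_event:
  fixes e :: real
  assumes "0 \<le> e" "e \<le> 1"
  shows "measure (bernoulli_field e) (witness_event b n y) \<le> card (witness_sets b n y) * e ^ (3 ^ n)"
proof -
  have "measure (bernoulli_field e) (witness_event b n y)
          \<le> (\<Sum>S\<in>witness_sets b n y. measure (bernoulli_field e) (cyl S))"
    unfolding witness_event_eq
    by (rule measure_UNION_le) (use finite_witness_sets card_witness_set cyl_sets in auto)
  also have "\<dots> = (\<Sum>S\<in>witness_sets b n y. e ^ (3 ^ n))"
    by (rule sum.cong) (use card_witness_set measure_cyl assms in auto)
  finally show ?thesis by simp
qed

lemma measure_witness_event_exp: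
  fixes e K :: real
  assumes card_W: "\<And>n x. real (card (witness_sets b n x)) \<le> exp (3 ^ n * K)"
    and e: "0 < e" "e \<le> 1"
  shows "measure (bernoulli_field e) (witness_event b n y) \<le> exp (3 ^ n * (K + ln e))"
proof -
  have "measure (bernoulli_field e) (witness_event b n y) \<le> card (witness_sets b n y) * e ^ (3 ^ n)"
    using measure_witness_event e by simp
  also have "\<dots> \<le> exp (3 ^ n * K) * e ^ (3 ^ n)"
    using card_W[of n y] e by (intro mult_right_mono) auto
  also have "\<dots> = exp (3 ^ n * K) * exp (3 ^ n * ln e)"
    using e exp_of_nat_mult[of "3 ^ n" "ln e"] by simp
  also have "\<dots> = exp (3 ^ n * (K + ln e))"
    by (simp add: distrib_left exp_add)
  finally show ?thesis .
qed

lemma real_le_three_pow: "real i \<le> 3 ^ i"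
proof -
  have "i < 2 ^ i"
    by (rule less_exp)
  also have "(2::nat) ^ i \<le> 3 ^ i"
    by (rule power_mono) auto
  finally show ?thesis
    using of_nat_le_iff[of i "3 ^ i"] by simp
qed

lemma measure_bad_event:
  fixes b :: "nat \<Rightarrow> int" and e K S :: real
  assumes b1: "\<And>k. k \<ge> 1 \<Longrightarrow> b k \<ge> 1"
    and card_W: "\<And>n x. real (card (witness_sets b n x)) \<le> exp (3 ^ n * K)"
    and ln_b: "\<And>i. ln (real_of_int (b (Suc i))) \<le> 3 * 3 ^ i * S"
    and e: "0 < e" "e \<le> 1" "ln e \<le> - (K + 6 * S + 1)"
  shows "measure (bernoulli_field e) (bad_event b x i) \<le> 9 * exp (- real i)"
proof -
  let ?M = "bernoulli_field e"
  define B where "B = real_of_int (b (Suc i))"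
  have B1: "B \<ge> 1"
    using b1 by (simp add: B_def)
  have single: "measure ?M (witness_event b i y) \<le> exp (3 ^ i * (K + ln e))" for y
    using measure_witness_event_exp[OF card_W e(1,2)] .
  have square: "(2 * B + 1) ^ 2 \<le> 9 * exp (3 ^ i * (6 * S))"
  proof -
    have "(2 * B + 1) ^ 2 \<le> (3 * B) ^ 2"
      using B1 by (intro power_mono) auto
    also have "\<dots> = 9 * exp (2 * ln B)"
      using B1 exp_of_nat_mult[of 2 "ln B"] by (simp add: power2_eq_square)
    also have "\<dots> \<le> 9 * exp (3 ^ i * (6 * S))"
      using ln_b[of i] by (simp add: B_def algebra_simps)
    finally show ?thesis .
  qed
  have "3 ^ i * (6 * S + K + ln e) \<le> 3 ^ i * (-1 :: real)"
    using e(3) by (intro mult_left_mono) auto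
  then have exponent: "3 ^ i * (6 * S) + 3 ^ i * (K + ln e) \<le> - real i"
    by (simp add: algebra_simps) (use real_le_three_pow[of i] in linarith)
  have "measure ?M (bad_event b x i) \<le> (\<Sum>y\<in>sq x (b (Suc i)). measure ?M (witness_event b i y))"
    unfolding bad_event_def by (rule measure_UNION_le) (auto simp: witness_event_sets)
  also have "\<dots> \<le> (\<Sum>y\<in>sq x (b (Suc i)). exp (3 ^ i * (K + ln e)))"
    by (rule sum_mono) (rule single)
  also have "\<dots> = (2 * B + 1) ^ 2 * exp (3 ^ i * (K + ln e))"
    using card_sq[of "b (Suc i)" x] b1[of "Suc i"] by (simp add: B_def)
  also have "\<dots> \<le> 9 * exp (3 ^ i * (6 * S)) * exp (3 ^ i * (K + ln e))"
    using square by (intro mult_right_mono) auto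
  also have "\<dots> \<le> 9 * exp (- real i)"
    using exponent by (simp add: mult.assoc exp_add[symmetric])
  finally show ?thesis .
qed

text \<open>Borel-Cantelli: since the bad events near each point have summable probabilities and
  there are countably many points, almost surely only finitely many of them occur at any point.\<close>

lemma AE_bad_events_finite:
  assumes meas: "\<And>x i. measure (bernoulli_field e) (bad_event b x i) \<le> 9 * exp (- real i)"
  shows "AE \<omega> in bernoulli_field e. \<forall>x. \<forall>\<^sub>F i in sequentially. \<omega> \<notin> bad_event b x i"
proof -
  let ?M = "bernoulli_field e"
  interpret prob_space ?M
    by (rule prob_space_bernoulli_field)
  have geometric: "summable (\<lambda>i. 9 * exp (- real i))"
  proof -
    have "(\<lambda>i. exp (- real i)) = (\<lambda>i. exp (-1) ^ i)"
      by (simp add: fun_eq_iff exp_of_nat_mult[symmetric])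
    moreover have "summable (\<lambda>i. exp (-1) ^ i :: real)"
      by (rule summable_geometric) simp
    ultimately show ?thesis
      by (simp add: summable_mult)
  qed
  have "summable (\<lambda>i. measure ?M (bad_event b x i))" for x
    by (rule summable_comparison_test[OF _ geometric]) (use meas in auto)
  then have "AE \<omega> in ?M. \<forall>\<^sub>F i in sequentially. \<omega> \<in> space ?M - bad_event b x i" for x
    by (intro borel_cantelli_AE1) (simp_all add: bad_event_sets emeasure_finite less_top[symmetric])
  then have "AE \<omega> in ?M. \<forall>\<^sub>F i in sequentially. \<omega> \<notin> bad_event b x i" for x
    by (rule eventually_mono) (auto elim: eventually_mono)
  then show ?thesis
    by (subst AE_all_countable) blast
qed

theorem mainTheorem14:
  fixes a b :: "nat \<Rightarrow> int"
  assumes "\<And>n. n \<ge> 1 \<Longrightarrow> 12 * (\<Sum>k\<in>{1..<n}. b k) < a n \<and> a n \<le> b n"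
    and "summable (\<lambda>i. ln (real_of_int (b (Suc i))) / 3 ^ (Suc i))"
  shows "\<forall>\<^sub>F eps in at_right (0::real).
           AE \<omega> in bernoulli_field eps. bi_sparse a b {p. \<omega> p}"
proof -
  have b1: "\<And>k. k \<ge> 1 \<Longrightarrow> b k \<ge> 1"
    using b_positive[OF assms(1)] by (meson int_one_le_iff_zero_less)
  obtain K where K: "K \<ge> 0" "\<And>n x. real (card (witness_sets b n x)) \<le> exp (3 ^ n * K)"
    using card_witness_sets_uniform[OF b1 assms(2)] by blast
  define S where "S = (\<Sum>i. ln (real_of_int (b (Suc i))) / 3 ^ (Suc i))"
  have terms_nonneg: "ln (real_of_int (b (Suc i))) / 3 ^ Suc i \<ge> 0" for i
    using b1[of "Suc i"] by simp
  have ln_b: "ln (real_of_int (b (Suc i))) \<le> 3 * 3 ^ i * S" for i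
    using sum_le_suminf[OF assms(2), of "{i}"] terms_nonneg by (simp add: S_def field_simps)
  have "S \<ge> 0"
    using assms(2) terms_nonneg by (simp add: S_def suminf_nonneg)
  then have e0: "exp (- (K + 6 * S + 1)) \<le> 1"
    using K(1) by simp
  show ?thesis
  proof (rule eventually_mono[OF eventually_at_right_real[OF exp_gt_zero]])
    fix e :: real assume "e \<in> {0<..<exp (- (K + 6 * S + 1))}"
    then have "0 < e" "e < exp (- (K + 6 * S + 1))"
      by auto
    moreover from this have "ln e < - (K + 6 * S + 1)"
      using ln_less_cancel_iff[of e "exp (- (K + 6 * S + 1))"] by simp
    ultimately have e: "0 < e" "e \<le> 1" "ln e \<le> - (K + 6 * S + 1)"
      using e0 by linarith+
    have "measure (bernoulli_field e) (bad_event b x i) \<le> 9 * exp (- real i)" for x i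
      using b1 K(2) ln_b e by (rule measure_bad_event)
    then have "AE \<omega> in bernoulli_field e. \<forall>x. \<forall>\<^sub>F i in sequentially. \<omega> \<notin> bad_event b x i"
      by (rule AE_bad_events_finite)
    then show "AE \<omega> in bernoulli_field e. bi_sparse a b {p. \<omega> p}"
      by (rule eventually_mono) (rule bi_sparse_if_bad_events_finite[OF assms(1)])
  qed
qed

end
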